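(* Let $f:\mathbb{R}^n\to(-\infty,+\infty]$ be proper, lower semicontinuous and prox-bounded with threshold $\lambda_f>0$, and let $0<\lambda<\lambda_f$. Then the following are equivalent: (a) $P_\lambda f$ is single-valued everywhere; (b) for every $x\in\mathbb{R}^n$ there exists $u\in P_\lambda f(x)$ such that $\lambda f+j$ is essentially strongly convex at $u$ for $x$; (c) $\lambda f+j$ is essentially strictly convex. When one of these holds, $P_\lambda f=\nabla(\lambda f+j)^*$.
   Context: $j:=\frac12\|\cdot\|^2$; $^*$ denotes the Fenchel conjugate. $P_\lambda f(x):=\operatorname{argmin}_y\{f(y)+\frac1{2\lambda}\|y-x\|^2\}$; prox-bounded with threshold $\lambda_f=\sup\{\lambda>0:\inf_y\{f(y)+\frac1{2\lambda}\|y-x\|^2\}>-\infty\text{ for some }x\}$. $\Gamma_0$: proper lsc convex $\psi:[0,\infty)\to[0,\infty]$ with $\psi(t)=0$ iff $t=0$. $g$ is essentially strongly convex at $u\in\operatorname{dom}g$ for $x$ if for some $\psi\in\Gamma_0$, $g(y)\ge g(u)+\langle y-u,x\rangle+\psi(\|y-u\|)$ for all $y$. Essential strict convexity is in the sense of Rockafellar (a proper convex function strictly convex on every convex subset of $\operatorname{dom}\partial g$; for proper lsc convex $g$ on $\mathbb{R}^n$ this is equivalent to $g^*$ being essentially smooth). *)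

theory Defs
  imports "HOL-Analysis.Analysis" "HOL-Library.Liminf_Limsup"
begin

definition proper_fun :: "('a \<Rightarrow> ereal) \<Rightarrow> bool" where
  "proper_fun f \<longleftrightarrow> (\<forall>x. f x \<noteq> -\<infinity>) \<and> (\<exists>x. f x \<noteq> \<infinity>)"

definition lsc_fun :: "('a::topological_space \<Rightarrow> ereal) \<Rightarrow> bool" where
  "lsc_fun f \<longleftrightarrow> (\<forall>x. f x \<le> Liminf (at x) f)"

definition jfun :: "'a::real_normed_vector \<Rightarrow> real" where
  "jfun x = (norm x)\<^sup>2 / 2"

definition fconj :: "('a::real_inner \<Rightarrow> ereal) \<Rightarrow> 'a \<Rightarrow> ereal" where
  "fconj g x = (SUP y. ereal (inner x y) - g y)"

definition moreau_env :: "real \<Rightarrow> ('a::real_normed_vector \<Rightarrow> ereal) \<Rightarrow> 'a \<Rightarrow> ereal" where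
  "moreau_env lam f x = (INF y. f y + ereal ((norm (y - x))\<^sup>2 / (2 * lam)))"

definition prox :: "real \<Rightarrow> ('a::real_normed_vector \<Rightarrow> ereal) \<Rightarrow> 'a \<Rightarrow> 'a set" where
  "prox lam f x = {u. \<forall>y. f u + ereal ((norm (u - x))\<^sup>2 / (2 * lam))
                          \<le> f y + ereal ((norm (y - x))\<^sup>2 / (2 * lam))}"

definition prox_bounded :: "('a::real_normed_vector \<Rightarrow> ereal) \<Rightarrow> bool" where
  "prox_bounded f \<longleftrightarrow> (\<exists>lam>0. \<exists>x. moreau_env lam f x > -\<infinity>)"

definition prox_threshold :: "('a::real_normed_vector \<Rightarrow> ereal) \<Rightarrow> ereal" where
  "prox_threshold f = Sup {ereal lam | lam. lam > 0 \<and> (\<exists>x. moreau_env lam f x > -\<infinity>)}"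

text \<open>Convexity of an extended-real-valued function (which never takes -infinity);
  note ereal s * \<infinity> = \<infinity> for s > 0.\<close>
definition convex_efun :: "('a::real_vector \<Rightarrow> ereal) \<Rightarrow> bool" where
  "convex_efun g \<longleftrightarrow> (\<forall>x y s. 0 < s \<and> s < 1 \<longrightarrow>
      g (s *\<^sub>R x + (1 - s) *\<^sub>R y) \<le> ereal s * g x + ereal (1 - s) * g y)"

definition strictly_convex_on_efun :: "'a set \<Rightarrow> ('a::real_vector \<Rightarrow> ereal) \<Rightarrow> bool" where
  "strictly_convex_on_efun C g \<longleftrightarrow> (\<forall>x\<in>C. \<forall>y\<in>C. \<forall>s. x \<noteq> y \<and> 0 < s \<and> s < 1 \<longrightarrow>
      g (s *\<^sub>R x + (1 - s) *\<^sub>R y) < ereal s * g x + ereal (1 - s) * g y)"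

definition subdiff :: "('a::real_inner \<Rightarrow> ereal) \<Rightarrow> 'a \<Rightarrow> 'a set" where
  "subdiff g x = {v. \<bar>g x\<bar> \<noteq> \<infinity> \<and> (\<forall>y. g y \<ge> g x + ereal (inner v (y - x)))}"

definition ess_strictly_convex :: "('a::real_inner \<Rightarrow> ereal) \<Rightarrow> bool" where
  "ess_strictly_convex g \<longleftrightarrow> proper_fun g \<and> convex_efun g \<and>
     (\<forall>C. convex C \<and> C \<subseteq> {x. subdiff g x \<noteq> {}} \<longrightarrow> strictly_convex_on_efun C g)"

definition Gamma0 :: "(real \<Rightarrow> ereal) set" where
  "Gamma0 = {psi. (\<forall>t\<ge>0. psi t \<ge> 0) \<and> psi 0 = 0 \<and> (\<forall>t>0. psi t \<noteq> 0)
      \<and> (\<forall>t\<ge>0. psi t \<le> Liminf (at t within {0..}) psi)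
      \<and> (\<forall>a\<ge>0. \<forall>b\<ge>0. \<forall>s. 0 < s \<and> s < 1 \<longrightarrow>
            psi (s * a + (1 - s) * b) \<le> ereal s * psi a + ereal (1 - s) * psi b)}"

definition ess_strongly_convex_at :: "('a::real_inner \<Rightarrow> ereal) \<Rightarrow> 'a \<Rightarrow> 'a \<Rightarrow> bool" where
  "ess_strongly_convex_at g u x \<longleftrightarrow> \<bar>g u\<bar> \<noteq> \<infinity> \<and>
     (\<exists>psi\<in>Gamma0. \<forall>y. g y \<ge> g u + ereal (inner (y - u) x) + psi (norm (y - u)))"

end

theory Submission
  imports Defs
begin

text \<open>
  With \<open>g = \<lambda>f + j\<close>, the set \<open>P\<^sub>\<lambda> f(x)\<close> is the set of minimizers of the tilted function
  \<open>g - \<langle>x, \<cdot>\<rangle>\<close>, and \<open>\<lambda> < \<lambda>\<^sub>f\<close> makes \<open>g\<close> grow quadratically, so these minimizers exist and are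
  exactly the points \<open>u\<close> with \<open>x \<in> \<partial>g(u)\<close>. Two distinct minimizers span a segment of minimizers inside
  \<open>dom \<partial>g\<close>, which essential strict convexity rules out, and a strong convexity modulus at a
  minimizer rules them out as well.

  Conversely, let the minimizer \<open>p(x)\<close> be unique. Compactness and lower semicontinuity make \<open>p\<close>
  continuous, and since \<open>p(x)\<close> is a subgradient of \<open>g\<^sup>*\<close> at \<open>x\<close>, the conjugate is differentiable with
  gradient \<open>p\<close>. Minimizing \<open>g\<^sup>* - \<langle>\<cdot>, z\<rangle> + t|\<cdot>|\<^sup>2/2\<close> yields points \<open>p(x\<^sub>t) \<rightarrow> z\<close> with
  \<open>g(p(x\<^sub>t)) \<le> g\<^sup>*\<^sup>*(z)\<close>, so \<open>g = g\<^sup>*\<^sup>*\<close> is convex. A point of \<open>dom \<partial>g\<close> where strict convexity fails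
  would make a whole segment minimize one tilt; and the positive gap of the tilted function on
  spheres around \<open>p(x)\<close>, spread out by convexity, yields a modulus of strong convexity.
\<close>

section \<open>Lower semicontinuous and coercive functions\<close>

lemma lsc_fun_imp_open_superlevel:
  assumes "lsc_fun f"
  shows "open {y. ereal t < f y}"
proof (rule open_subopen[THEN iffD2], rule ballI)
  fix y assume y: "y \<in> {y. ereal t < f y}"
  have "f y \<le> Liminf (at y) f" using assms unfolding lsc_fun_def by blast
  with y have "ereal t < Liminf (at y) f" by simp
  then have "eventually (\<lambda>z. ereal t < f z) (at y)" by (rule less_LiminfD)
  then obtain S where "open S" "y \<in> S" "\<forall>z\<in>S. z \<noteq> y \<longrightarrow> ereal t < f z"
    unfolding eventually_at_topological by auto
  with y have "open S \<and> y \<in> S \<and> S \<subseteq> {y. ereal t < f y}" by auto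
  then show "\<exists>T. open T \<and> y \<in> T \<and> T \<subseteq> {y. ereal t < f y}" by blast
qed

lemma open_superlevel_add_continuous:
  fixes F :: "'a::topological_space \<Rightarrow> ereal"
  assumes F: "\<And>t. open {y. ereal t < F y}" and q: "continuous_on UNIV q"
    and not_MInf: "\<And>y. F y \<noteq> -\<infinity>"
  shows "open {y. ereal t < F y + ereal (q y)}"
proof -
  have "{y. ereal t < F y + ereal (q y)} = (\<Union>a. {y. ereal a < F y} \<inter> {y. t - a < q y})"
  proof (intro set_eqI iffI)
    fix y assume "y \<in> {y. ereal t < F y + ereal (q y)}"
    then show "y \<in> (\<Union>a. {y. ereal a < F y} \<inter> {y. t - a < q y})"
    proof (cases "F y")
      case (real r)
      with \<open>y \<in> _\<close> show ?thesis by (intro UN_I[of "(t - q y + r) / 2"]) (auto simp: field_simps)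
    next
      case PInf
      then show ?thesis by (intro UN_I[of "t - q y + 1"]) auto
    qed (use not_MInf in auto)
  next
    fix y assume "y \<in> (\<Union>a. {y. ereal a < F y} \<inter> {y. t - a < q y})"
    then show "y \<in> {y. ereal t < F y + ereal (q y)}" by (cases "F y") auto
  qed
  then show ?thesis
    by (simp only:) (intro open_UN ballI open_Int F open_Collect_less continuous_intros q)
qed

lemma open_superlevel_mult:
  fixes F :: "'a::topological_space \<Rightarrow> ereal"
  assumes "\<And>t. open {y. ereal t < F y}" and "0 < c"
  shows "open {y. ereal t < ereal c * F y}"
proof -
  have "{y. ereal t < ereal c * F y} = {y. ereal (t / c) < F y}"
  proof (rule Collect_cong)
    show "ereal t < ereal c * F y \<longleftrightarrow> ereal (t / c) < F y" for y
      using \<open>0 < c\<close> by (cases "F y") (auto simp: field_simps)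
  qed
  with assms(1) show ?thesis by simp
qed

lemma open_superlevel_attains_inf:
  fixes F :: "'a::topological_space \<Rightarrow> ereal"
  assumes F: "\<And>t. open {y. ereal t < F y}" and "compact K" "K \<noteq> {}"
  shows "\<exists>y\<in>K. \<forall>z\<in>K. F y \<le> F z"
proof -
  let ?m = "INF z\<in>K. F z"
  have closed_sublevel: "closed {y. F y \<le> ereal t}" for t
    using F[of t] by (simp add: closed_def Compl_eq not_le)
  have "K \<inter> (\<Inter>t\<in>{t. ?m < ereal t}. {y. F y \<le> ereal t}) \<noteq> {}"
  proof (rule compact_imp_fip_image[OF \<open>compact K\<close> closed_sublevel])
    fix I assume I: "finite I" "I \<subseteq> {t. ?m < ereal t}"
    show "K \<inter> (\<Inter>t\<in>I. {y. F y \<le> ereal t}) \<noteq> {}"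
    proof (cases "I = {}")
      case False
      with I have "?m < ereal (Min I)" by (meson Min_in mem_Collect_eq subsetD)
      then obtain y where "y \<in> K" "F y < ereal (Min I)" by (meson INF_less_iff)
      moreover have "F y \<le> ereal t" if "t \<in> I" for t
        using \<open>F y < ereal (Min I)\<close> Min_le[OF I(1) that]
        by (meson ereal_less_eq(3) less_imp_le order_trans)
      ultimately show ?thesis by blast
    qed (use \<open>K \<noteq> {}\<close> in auto)
  qed
  then obtain y where y: "y \<in> K" "\<And>t. ?m < ereal t \<Longrightarrow> F y \<le> ereal t" by auto
  have "F y \<le> ?m"
  proof (rule dense_ge)
    fix a assume "?m < a"
    with y(2) show "F y \<le> a" by (cases a) auto
  qed
  with y(1) show ?thesis by (meson INF_lower order_trans)
qed

lemma quadratic_eventually_gt: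
  fixes e B C :: real
  assumes "0 < e"
  obtains R where "0 \<le> R" "\<And>r. R \<le> r \<Longrightarrow> C < e * r\<^sup>2 - B * r"
proof
  define R where "R = (\<bar>B\<bar> + \<bar>C\<bar> + 1) / e + 1"
  show "0 \<le> R" using assms unfolding R_def by simp
  fix r assume "R \<le> r"
  moreover have "1 \<le> R" using assms unfolding R_def by simp
  ultimately have "1 \<le> r" by linarith
  from \<open>R \<le> r\<close> have "\<bar>B\<bar> + \<bar>C\<bar> + 1 \<le> e * r - e"
    using assms unfolding R_def by (simp add: field_simps)
  then have "\<bar>C\<bar> + 1 \<le> e * r - \<bar>B\<bar>" using assms by linarith
  then have "1 * (\<bar>C\<bar> + 1) \<le> r * (e * r - \<bar>B\<bar>)"
    using \<open>1 \<le> r\<close> by (intro mult_mono) auto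
  moreover have "B * r \<le> \<bar>B\<bar> * r" using \<open>1 \<le> r\<close> by (simp add: mult_right_mono)
  ultimately show "C < e * r\<^sup>2 - B * r" by (simp add: power2_eq_square algebra_simps)
qed

lemma hinge_convex:
  fixes a b s t d :: real
  assumes "0 < s" and "0 < 1 - s"
  shows "max 0 ((s * a + (1 - s) * b - t) * d)
    \<le> s * max 0 ((a - t) * d) + (1 - s) * max 0 ((b - t) * d)"
proof -
  have "(s * a + (1 - s) * b - t) * d = s * ((a - t) * d) + (1 - s) * ((b - t) * d)"
    by (simp add: algebra_simps)
  moreover have "s * ((a - t) * d) \<le> s * max 0 ((a - t) * d)"
    and "(1 - s) * ((b - t) * d) \<le> (1 - s) * max 0 ((b - t) * d)"
    using assms by (intro mult_left_mono; simp)+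
  moreover have "0 \<le> s * max 0 ((a - t) * d)" and "0 \<le> (1 - s) * max 0 ((b - t) * d)"
    using assms by simp_all
  ultimately show ?thesis by linarith
qed

lemma hinge_SUP_in_Gamma0:
  fixes d :: "real \<Rightarrow> real"
  assumes d: "\<And>t. 0 < t \<Longrightarrow> 0 < d t"
  shows "(\<lambda>r. SUP t\<in>{0<..}. ereal (max 0 ((r - t) * d t))) \<in> Gamma0"
proof -
  define psi where "psi r = (SUP t\<in>{0<..}. ereal (max 0 ((r - t) * d t)))" for r
  have psi_ge: "ereal (max 0 ((r - t) * d t)) \<le> psi r" if "0 < t" for r t
    unfolding psi_def using that by (intro SUP_upper) auto
  have psi_nonneg: "0 \<le> psi r" for r
    using psi_ge[of 1 r] by (simp add: zero_ereal_def)
  have "psi \<in> Gamma0"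
    unfolding Gamma0_def
  proof (intro CollectI conjI allI impI)
    show "0 \<le> psi t" for t by (rule psi_nonneg)
  next
    have "psi 0 \<le> 0"
      unfolding psi_def by (rule SUP_least) (use d in \<open>auto simp: mult_nonpos_nonneg\<close>)
    then show "psi 0 = 0" using psi_nonneg[of 0] by simp
  next
    fix t :: real assume "0 < t"
    then have "0 < ereal (max 0 ((t - t / 2) * d (t / 2)))" using d[of "t / 2"] by simp
    also have "\<dots> \<le> psi t" using \<open>0 < t\<close> by (intro psi_ge) simp
    finally show "psi t \<noteq> 0" by simp
  next
    fix t :: real assume "0 \<le> t"
    let ?F = "at t within {0::real..}"
    have "t islimpt {0..}" using islimpt_subset[of t "{0..t + 1}" "{0..}"] \<open>0 \<le> t\<close> by auto
    then have "?F \<noteq> bot" by (simp add: trivial_limit_within)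
    show "psi t \<le> Liminf ?F psi"
      unfolding psi_def[of t]
    proof (rule SUP_least)
      fix \<tau> :: real assume "\<tau> \<in> {0<..}"
      have "ereal (max 0 ((t - \<tau>) * d \<tau>)) = Liminf ?F (\<lambda>r. ereal (max 0 ((r - \<tau>) * d \<tau>)))"
        using \<open>?F \<noteq> bot\<close> by (intro lim_imp_Liminf[symmetric] tendsto_ereal tendsto_intros)
      also have "\<dots> \<le> Liminf ?F psi"
        using \<open>\<tau> \<in> {0<..}\<close> by (intro Liminf_mono always_eventually allI psi_ge) simp
      finally show "ereal (max 0 ((t - \<tau>) * d \<tau>)) \<le> Liminf ?F psi" .
    qed
  next
    fix a b s :: real assume "0 < s \<and> s < 1"
    then have s: "0 < s" "0 < 1 - s" by auto
    show "psi (s * a + (1 - s) * b) \<le> ereal s * psi a + ereal (1 - s) * psi b"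
      unfolding psi_def[of "s * a + (1 - s) * b"]
    proof (rule SUP_least)
      fix \<tau> :: real assume "\<tau> \<in> {0<..}"
      let ?h = "\<lambda>r. max 0 ((r - \<tau>) * d \<tau>)"
      have "ereal (?h (s * a + (1 - s) * b)) \<le> ereal s * ereal (?h a) + ereal (1 - s) * ereal (?h b)"
        using hinge_convex[OF s] by (simp only: times_ereal.simps(1) plus_ereal.simps(1) ereal_less_eq(3))
      also have "\<dots> \<le> ereal s * psi a + ereal (1 - s) * psi b"
        using s \<open>\<tau> \<in> {0<..}\<close> by (intro add_mono ereal_mult_left_mono psi_ge) auto
      finally show "ereal (?h (s * a + (1 - s) * b)) \<le> ereal s * psi a + ereal (1 - s) * psi b" .
    qed
  qed
  then show ?thesis unfolding psi_def .
qed

lemma has_derivative_if_continuous_subgradient: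
  fixes \<phi> :: "'a::real_inner \<Rightarrow> real"
  assumes sub: "\<And>x z. \<phi> x + inner (z - x) (p x) \<le> \<phi> z" and cont: "continuous (at x) p"
  shows "(\<phi> has_derivative inner (p x)) (at x)"
  unfolding has_derivative_within_alt
proof (intro conjI allI impI)
  show "bounded_linear (inner (p x))" by (rule bounded_linear_inner_right)
  fix e :: real assume "0 < e"
  then obtain d where "0 < d" and d: "\<And>y. dist y x < d \<Longrightarrow> dist (p y) (p x) < e"
    using cont unfolding continuous_at_eps_delta by blast
  have "norm (\<phi> y - \<phi> x - inner (p x) (y - x)) \<le> e * norm (y - x)" if "norm (y - x) < d" for y
  proof -
    have "0 \<le> \<phi> y - \<phi> x - inner (p x) (y - x)"
      using sub[of x y] by (simp add: inner_commute)
    moreover have "\<phi> y - \<phi> x - inner (p x) (y - x) \<le> inner (y - x) (p y - p x)"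
      using sub[of y x] by (simp add: inner_commute inner_diff_left inner_diff_right)
    moreover have "inner (y - x) (p y - p x) \<le> norm (y - x) * norm (p y - p x)"
      by (rule norm_cauchy_schwarz)
    moreover have "norm (y - x) * norm (p y - p x) \<le> norm (y - x) * e"
      using d[of y] that by (intro mult_left_mono) (auto simp: dist_norm)
    ultimately show ?thesis by (simp add: mult.commute)
  qed
  with \<open>0 < d\<close> show "\<exists>d>0. \<forall>y\<in>UNIV. norm (y - x) < d \<longrightarrow>
      norm (\<phi> y - \<phi> x - inner (p x) (y - x)) \<le> e * norm (y - x)" by blast
qed

lemma continuous_quadratic_growth_attains_min:
  fixes \<psi> :: "'a::euclidean_space \<Rightarrow> real"
  assumes "continuous_on UNIV \<psi>" and "0 < a" and growth: "\<And>x. a * (norm x)\<^sup>2 - b \<le> \<psi> x"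
  obtains x0 where "\<And>x. \<psi> x0 \<le> \<psi> x"
proof -
  obtain R where "0 \<le> R" and R: "\<And>r. R \<le> r \<Longrightarrow> \<psi> 0 + b < a * r\<^sup>2 - 0 * r"
    using quadratic_eventually_gt[OF \<open>0 < a\<close>] by blast
  obtain x0 where "x0 \<in> cball 0 R" and x0: "\<And>y. y \<in> cball 0 R \<Longrightarrow> \<psi> x0 \<le> \<psi> y"
    using continuous_attains_inf[OF compact_cball _ continuous_on_subset[OF assms(1)], of 0 R]
      \<open>0 \<le> R\<close> by auto
  have "\<psi> x0 \<le> \<psi> x" for x
  proof (cases "x \<in> cball 0 R")
    case False
    then have "\<psi> 0 < \<psi> x" using R[of "norm x"] growth[of x] by simp
    moreover have "\<psi> x0 \<le> \<psi> 0" using x0 \<open>0 \<le> R\<close> by simp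
    ultimately show ?thesis by simp
  qed (rule x0)
  then show ?thesis by (rule that)
qed

section \<open>Tilted functions and their minimizers\<close>

definition tilted :: "('a::real_inner \<Rightarrow> ereal) \<Rightarrow> 'a \<Rightarrow> 'a \<Rightarrow> ereal" where
  "tilted g x y = g y - ereal (inner x y)"

definition tilted_argmin :: "('a::real_inner \<Rightarrow> ereal) \<Rightarrow> 'a \<Rightarrow> 'a set" where
  "tilted_argmin g x = {u. \<forall>y. tilted g x u \<le> tilted g x y}"

lemma tilted_shift: "tilted g z y = tilted g x y + ereal (inner (x - z) y)"
  by (cases "g y") (auto simp: tilted_def inner_diff_left)

lemma tilted_argmin_finite_value:
  assumes "proper_fun g" and "u \<in> tilted_argmin g x"
  obtains r where "g u = ereal r"
proof -
  obtain y where "g y \<noteq> \<infinity>" "g y \<noteq> -\<infinity>" using assms(1) unfolding proper_fun_def by blast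
  then obtain r where "tilted g x y = ereal r" unfolding tilted_def by (cases "g y") auto
  moreover have "tilted g x u \<le> tilted g x y" using assms(2) unfolding tilted_argmin_def by blast
  ultimately have "tilted g x u \<noteq> \<infinity>" by auto
  moreover have "g u \<noteq> -\<infinity>" using assms(1) unfolding proper_fun_def by blast
  ultimately show ?thesis using that unfolding tilted_def by (cases "g u") auto
qed

lemma subdiff_iff_tilted_argmin:
  assumes "proper_fun g"
  shows "v \<in> subdiff g y \<longleftrightarrow> y \<in> tilted_argmin g v"
proof
  assume "v \<in> subdiff g y"
  then obtain r where r: "g y = ereal r" and sub: "\<And>z. g y + ereal (inner v (z - y)) \<le> g z"
    unfolding subdiff_def by (cases "g y") auto
  have "tilted g v y \<le> tilted g v z" for z
    using sub[of z] r by (cases "g z") (auto simp: tilted_def inner_diff_right)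
  then show "y \<in> tilted_argmin g v" unfolding tilted_argmin_def by blast
next
  assume y: "y \<in> tilted_argmin g v"
  then obtain r where r: "g y = ereal r" using tilted_argmin_finite_value[OF assms] by blast
  have "g y + ereal (inner v (z - y)) \<le> g z" for z
    using y r unfolding tilted_argmin_def
    by (cases "g z") (auto simp: tilted_def inner_diff_right dest: spec[of _ z])
  then show "v \<in> subdiff g y" unfolding subdiff_def using r by auto
qed

lemma convex_tilted_argmin:
  assumes "proper_fun g" and "convex_efun g"
  shows "convex (tilted_argmin g x)"
  unfolding convex_alt
proof (intro ballI allI impI)
  fix u v :: 'a and s :: real
  assume u: "u \<in> tilted_argmin g x" and v: "v \<in> tilted_argmin g x" and s: "0 \<le> s \<and> s \<le> 1"
  obtain U V where U: "g u = ereal U" and V: "g v = ereal V"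
    using tilted_argmin_finite_value[OF assms(1)] u v by metis
  have "tilted g x u = tilted g x v" using u v unfolding tilted_argmin_def by (blast intro: antisym)
  then have eq: "U - inner x u = V - inner x v" using U V by (simp add: tilted_def)
  show "(1 - s) *\<^sub>R u + s *\<^sub>R v \<in> tilted_argmin g x"
  proof (cases "s = 0 \<or> s = 1")
    case False
    then have "0 < 1 - s" "1 - s < 1" using s by auto
    define w where "w = (1 - s) *\<^sub>R u + s *\<^sub>R v"
    have "g ((1 - s) *\<^sub>R u + (1 - (1 - s)) *\<^sub>R v) \<le> ereal (1 - s) * g u + ereal (1 - (1 - s)) * g v"
      using assms(2) \<open>0 < 1 - s\<close> \<open>1 - s < 1\<close> unfolding convex_efun_def by blast
    then have le: "g w \<le> ereal ((1 - s) * U + s * V)" using U V unfolding w_def by simp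
    have "(1 - s) * U + s * V - inner x w = U - inner x u + s * ((V - inner x v) - (U - inner x u))"
      unfolding w_def by (simp add: algebra_simps)
    moreover have "s * ((V - inner x v) - (U - inner x u)) = 0" using eq by simp
    ultimately have "(1 - s) * U + s * V - inner x w = U - inner x u" by linarith
    with le have wu: "tilted g x w \<le> tilted g x u"
      using U unfolding tilted_def by (cases "g w") auto
    have "tilted g x w \<le> tilted g x y" for y
      using u unfolding tilted_argmin_def by (blast intro: order_trans[OF wu])
    then show ?thesis unfolding tilted_argmin_def w_def by blast
  qed (use u v in auto)
qed

lemma tilted_argmin_eq_singleton_if_ess_strongly_convex_at:
  assumes u: "u \<in> tilted_argmin g x" and "ess_strongly_convex_at g u x"
  shows "tilted_argmin g x = {u}"
proof -
  obtain psi where psi: "psi \<in> Gamma0"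
    and grow: "\<And>y. g u + ereal (inner (y - u) x) + psi (norm (y - u)) \<le> g y"
    using assms(2) unfolding ess_strongly_convex_at_def by blast
  obtain U where U: "g u = ereal U" using assms(2) unfolding ess_strongly_convex_at_def by force
  have "y = u" if y: "y \<in> tilted_argmin g x" for y
  proof (rule ccontr)
    assume "y \<noteq> u"
    then have "0 < psi (norm (y - u))" using psi unfolding Gamma0_def by (auto simp: order_le_neq_trans)
    have "tilted g x y \<le> tilted g x u" using y unfolding tilted_argmin_def by blast
    moreover have "inner (y - u) x = inner x y - inner x u" by (simp add: inner_commute inner_diff_right)
    ultimately have "g y \<le> ereal (U + inner (y - u) x)"
      using U by (cases "g y") (auto simp: tilted_def)
    moreover have "ereal (U + inner (y - u) x) + psi (norm (y - u)) \<le> g y" using grow[of y] U by simp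
    ultimately have "ereal (U + inner (y - u) x) + psi (norm (y - u)) \<le> ereal (U + inner (y - u) x)"
      by (rule order_trans[rotated])
    with \<open>0 < psi (norm (y - u))\<close> show False by (cases "psi (norm (y - u))") auto
  qed
  with u show ?thesis by blast
qed

lemma tilted_argmin_subsingleton_if_ess_strictly_convex:
  assumes strict: "ess_strictly_convex g"
    and u: "u \<in> tilted_argmin g x" and v: "v \<in> tilted_argmin g x"
  shows "u = v"
proof (rule ccontr)
  assume "u \<noteq> v"
  have proper: "proper_fun g" and "convex_efun g" using strict unfolding ess_strictly_convex_def by auto
  obtain U V where U: "g u = ereal U" and V: "g v = ereal V"
    using tilted_argmin_finite_value[OF proper] u v by metis
  have "tilted g x u = tilted g x v" using u v unfolding tilted_argmin_def by (blast intro: antisym)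
  then have eq: "U - inner x u = V - inner x v" using U V by (simp add: tilted_def)
  have "closed_segment u v \<subseteq> tilted_argmin g x"
    using closed_segment_subset[OF u v convex_tilted_argmin[OF proper \<open>convex_efun g\<close>]] .
  then have "closed_segment u v \<subseteq> {y. subdiff g y \<noteq> {}}"
    using subdiff_iff_tilted_argmin[OF proper] by blast
  then have "strictly_convex_on_efun (closed_segment u v) g"
    using strict convex_closed_segment unfolding ess_strictly_convex_def by blast
  then have sc: "\<And>a b s. \<lbrakk>a \<in> closed_segment u v; b \<in> closed_segment u v; a \<noteq> b; 0 < s; s < 1\<rbrakk>
      \<Longrightarrow> g (s *\<^sub>R a + (1 - s) *\<^sub>R b) < ereal s * g a + ereal (1 - s) * g b"
    unfolding strictly_convex_on_efun_def by blast
  have "g ((1/2) *\<^sub>R u + (1 - 1/2) *\<^sub>R v) < ereal (1/2) * g u + ereal (1 - 1/2) * g v"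
    by (rule sc) (use \<open>u \<noteq> v\<close> in auto)
  moreover have "(1/2) *\<^sub>R u + (1 - 1/2) *\<^sub>R v = midpoint u v"
    by (simp add: midpoint_def scaleR_add_right)
  ultimately have "g (midpoint u v) < ereal (U / 2 + V / 2)" using U V by simp
  moreover have "g (midpoint u v) \<noteq> -\<infinity>" using proper unfolding proper_fun_def by blast
  ultimately obtain W where W: "g (midpoint u v) = ereal W" and "W < U / 2 + V / 2"
    by (cases "g (midpoint u v)") auto
  moreover have "inner x (midpoint u v) = (inner x u + inner x v) / 2"
    by (simp add: midpoint_def inner_add_right)
  ultimately have "W - inner x (midpoint u v) < U - inner x u" using eq by simp
  then have "tilted g x (midpoint u v) < tilted g x u" using U W by (simp add: tilted_def)
  moreover have "tilted g x u \<le> tilted g x (midpoint u v)" using u unfolding tilted_argmin_def by blast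
  ultimately show False by simp
qed

locale coercive_lsc_fun =
  fixes g :: "'a::euclidean_space \<Rightarrow> ereal"
  assumes proper: "proper_fun g"
    and open_superlevel: "\<And>t. open {y. ereal t < g y}"
    and quadratic_minorant: "\<exists>\<epsilon>>0. \<exists>K. \<forall>y. ereal (\<epsilon> * (norm y)\<^sup>2 - K) \<le> g y"
begin

lemma not_MInf: "g y \<noteq> -\<infinity>"
  using proper unfolding proper_fun_def by blast

lemma open_superlevel_tilted: "open {y. ereal t < tilted g x y}"
proof -
  have "tilted g x y = g y + ereal (- inner x y)" for y
    using not_MInf[of y] by (cases "g y") (auto simp: tilted_def)
  moreover have "open {y. ereal t < g y + ereal (- inner x y)}"
    using open_superlevel continuous_on_minus[OF continuous_on_inner[OF continuous_on_const continuous_on_id]]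
      not_MInf by (rule open_superlevel_add_continuous)
  ultimately show ?thesis by simp
qed

lemma tilted_quadratic_minorant:
  obtains \<epsilon> K where "0 < \<epsilon>"
    and "\<And>x y. ereal (\<epsilon> * (norm y)\<^sup>2 - norm x * norm y - K) \<le> tilted g x y"
proof -
  obtain \<epsilon> K where "0 < \<epsilon>" and minorant: "\<And>y. ereal (\<epsilon> * (norm y)\<^sup>2 - K) \<le> g y"
    using quadratic_minorant by blast
  have "ereal (\<epsilon> * (norm y)\<^sup>2 - norm x * norm y - K) \<le> tilted g x y" for x y
  proof (cases "g y")
    case (real r)
    with minorant[of y] norm_cauchy_schwarz[of x y] show ?thesis by (simp add: tilted_def)
  qed (use not_MInf in \<open>auto simp: tilted_def\<close>)
  with \<open>0 < \<epsilon>\<close> show ?thesis by (rule that)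
qed

lemma tilted_argmin_nonempty: "\<exists>u. u \<in> tilted_argmin g x"
proof -
  obtain y0 where "g y0 \<noteq> \<infinity>" using proper unfolding proper_fun_def by blast
  then obtain c0 where y0: "tilted g x y0 = ereal c0"
    using not_MInf[of y0] by (cases "g y0") (auto simp: tilted_def)
  obtain \<epsilon> K where "0 < \<epsilon>" and minorant: "\<And>y. ereal (\<epsilon> * (norm y)\<^sup>2 - norm x * norm y - K) \<le> tilted g x y"
    using tilted_quadratic_minorant by metis
  obtain R where R: "\<And>r. R \<le> r \<Longrightarrow> c0 + K < \<epsilon> * r\<^sup>2 - norm x * r"
    using quadratic_eventually_gt[OF \<open>0 < \<epsilon>\<close>] by metis
  let ?B = "cball (0::'a) (max R (norm y0))"
  have "?B \<noteq> {}" by (simp add: max.coboundedI2)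
  then obtain u where u: "\<And>y. y \<in> ?B \<Longrightarrow> tilted g x u \<le> tilted g x y"
    using open_superlevel_attains_inf[OF open_superlevel_tilted compact_cball] by blast
  have "tilted g x u \<le> tilted g x y" for y
  proof (cases "y \<in> ?B")
    case False
    then have "R \<le> norm y" by simp
    then have "ereal c0 < ereal (\<epsilon> * (norm y)\<^sup>2 - norm x * norm y - K)" using R[of "norm y"] by simp
    also have "\<dots> \<le> tilted g x y" by (rule minorant)
    finally have "tilted g x y0 \<le> tilted g x y" using y0 by simp
    then show ?thesis using u[of y0] by simp
  qed (rule u)
  then show ?thesis unfolding tilted_argmin_def by blast
qed

end

section \<open>Functions with unique tilted minimizers\<close>

locale unique_tilted_argmin = coercive_lsc_fun +
  assumes unique: "\<And>x. \<exists>u. tilted_argmin g x = {u}"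
begin

definition minimizer :: "'a \<Rightarrow> 'a" where
  "minimizer x = (THE u. u \<in> tilted_argmin g x)"

definition conjugate :: "'a \<Rightarrow> real" where
  "conjugate x = inner x (minimizer x) - real_of_ereal (g (minimizer x))"

lemma tilted_argmin_eq: "tilted_argmin g x = {minimizer x}"
proof -
  obtain u where "tilted_argmin g x = {u}" using unique by blast
  then show ?thesis unfolding minimizer_def by simp
qed

lemma minimizer_le: "tilted g x (minimizer x) \<le> tilted g x y"
  using tilted_argmin_eq[of x] unfolding tilted_argmin_def by blast

lemma g_minimizer: "g (minimizer x) = ereal (inner x (minimizer x) - conjugate x)"
proof -
  obtain r where "g (minimizer x) = ereal r"
    using tilted_argmin_finite_value[OF proper] tilted_argmin_eq by blast
  then show ?thesis unfolding conjugate_def by simp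
qed

lemma tilted_minimizer: "tilted g x (minimizer x) = ereal (- conjugate x)"
  by (simp add: tilted_def g_minimizer)

lemma fenchel_young: "g y = ereal r \<Longrightarrow> inner x y - r \<le> conjugate x"
  using minimizer_le[of x y] by (simp add: tilted_def g_minimizer)

lemma fconj_eq_conjugate: "fconj g x = ereal (conjugate x)"
  unfolding fconj_def
proof (rule antisym)
  show "(SUP y. ereal (inner x y) - g y) \<le> ereal (conjugate x)"
  proof (rule SUP_least)
    fix y show "ereal (inner x y) - g y \<le> ereal (conjugate x)"
      using fenchel_young[of y _ x] not_MInf[of y] by (cases "g y") auto
  qed
  have "ereal (conjugate x) = ereal (inner x (minimizer x)) - g (minimizer x)"
    by (simp add: g_minimizer)
  also have "\<dots> \<le> (SUP y. ereal (inner x y) - g y)" by (rule SUP_upper) simp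
  finally show "ereal (conjugate x) \<le> (SUP y. ereal (inner x y) - g y)" .
qed

lemma conjugate_subgradient: "conjugate x + inner (z - x) (minimizer x) \<le> conjugate z"
  using fenchel_young[OF g_minimizer[of x], of z] by (simp add: inner_diff_left)

lemma tilted_gap_on_compact:
  assumes "compact K" and "minimizer x \<notin> K"
  obtains c where "0 < c" and "\<And>y. y \<in> K \<Longrightarrow> ereal (c - conjugate x) \<le> tilted g x y"
proof (cases "K = {}")
  case False
  then obtain y0 where "y0 \<in> K" and y0: "\<And>y. y \<in> K \<Longrightarrow> tilted g x y0 \<le> tilted g x y"
    using open_superlevel_attains_inf[OF open_superlevel_tilted assms(1)] by blast
  have "ereal (- conjugate x) < tilted g x y0"
  proof (rule ccontr)
    assume "\<not> ?thesis"
    then have "tilted g x y0 \<le> tilted g x (minimizer x)" by (simp add: tilted_minimizer)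
    then have "tilted g x y0 \<le> tilted g x y" for y using order_trans minimizer_le by blast
    then have "y0 \<in> tilted_argmin g x" unfolding tilted_argmin_def by blast
    with \<open>y0 \<in> K\<close> assms(2) show False by (simp add: tilted_argmin_eq)
  qed
  then obtain t where "- conjugate x < t" and "ereal t < tilted g x y0"
    using ereal_dense2 by force
  with y0 have "0 < t + conjugate x" "\<And>y. y \<in> K \<Longrightarrow> ereal (t + conjugate x - conjugate x) \<le> tilted g x y"
    by (auto intro: order.trans[OF less_imp_le])
  then show ?thesis by (rule that)
qed (use that[of 1] in simp)

lemma minimizer_locally_bounded:
  obtains R where "\<And>z. dist z x < 1 \<Longrightarrow> norm (minimizer z) < R"
proof -
  obtain \<epsilon> K where "0 < \<epsilon>"
    and minorant: "\<And>x y. ereal (\<epsilon> * (norm y)\<^sup>2 - norm x * norm y - K) \<le> tilted g x y"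
    using tilted_quadratic_minorant by metis
  obtain R where R: "\<And>r. R \<le> r \<Longrightarrow> norm (minimizer x) - conjugate x + K < \<epsilon> * r\<^sup>2 - (norm x + 1) * r"
    using quadratic_eventually_gt[OF \<open>0 < \<epsilon>\<close>] by metis
  have "norm (minimizer z) < R" if "dist z x < 1" for z
  proof (rule ccontr)
    assume "\<not> ?thesis"
    then have "R \<le> norm (minimizer z)" by simp
    have "norm z \<le> norm x + 1" using that norm_triangle_ineq2[of z x] by (simp add: dist_norm)
    then have zpz: "norm z * norm (minimizer z) \<le> (norm x + 1) * norm (minimizer z)"
      by (simp add: mult_right_mono)
    have "inner (x - z) (minimizer x) \<le> norm (x - z) * norm (minimizer x)"
      by (rule norm_cauchy_schwarz)
    also have "\<dots> \<le> norm (minimizer x)"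
      using that by (simp add: dist_norm norm_minus_commute mult_left_le_one_le)
    finally have shift: "inner (x - z) (minimizer x) \<le> norm (minimizer x)" .
    have "ereal (\<epsilon> * (norm (minimizer z))\<^sup>2 - norm z * norm (minimizer z) - K) \<le> tilted g z (minimizer z)"
      by (rule minorant)
    also have "\<dots> \<le> tilted g z (minimizer x)" by (rule minimizer_le)
    also have "\<dots> = ereal (- conjugate x + inner (x - z) (minimizer x))"
      by (simp add: tilted_shift[of g z _ x] tilted_minimizer)
    finally have "\<epsilon> * (norm (minimizer z))\<^sup>2 - norm z * norm (minimizer z) - K
        \<le> - conjugate x + inner (x - z) (minimizer x)" by simp
    with R[OF \<open>R \<le> norm (minimizer z)\<close>] zpz shift show False by linarith
  qed
  then show ?thesis by (rule that)
qed

text \<open>The \<open>x\<close>-tilt exceeds its minimum by a fixed gap away from \<open>minimizer x\<close>, and a small change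
  of the tilt perturbs the tilted function on bounded sets by less than that gap.\<close>

lemma continuous_minimizer: "continuous (at x) minimizer"
  unfolding continuous_at_eps_delta
proof (intro allI impI)
  fix e :: real assume "0 < e"
  obtain R where R: "\<And>z. dist z x < 1 \<Longrightarrow> norm (minimizer z) < R"
    using minimizer_locally_bounded by metis
  let ?K = "cball 0 R \<inter> {y. e \<le> dist y (minimizer x)}"
  have "compact ?K" by (intro compact_Int_closed compact_cball closed_Collect_le continuous_intros)
  moreover have "minimizer x \<notin> ?K" using \<open>0 < e\<close> by simp
  ultimately obtain c where "0 < c" and gap: "\<And>y. y \<in> ?K \<Longrightarrow> ereal (c - conjugate x) \<le> tilted g x y"
    using tilted_gap_on_compact by blast
  let ?L = "R + norm (minimizer x)"
  have "norm (minimizer x) < R" using R[of x] by simp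
  then have "0 < ?L" using norm_ge_zero[of "minimizer x"] by linarith
  define d where "d = min 1 (c / ?L)"
  have "d \<le> c / ?L" by (simp add: d_def)
  then have "d * ?L \<le> c" using \<open>0 < ?L\<close> by (simp add: le_divide_eq)
  have "dist (minimizer z) (minimizer x) < e" if "dist z x < d" for z
  proof (rule ccontr)
    assume "\<not> ?thesis"
    moreover have "norm (minimizer z) < R" using R that by (simp add: d_def)
    ultimately have "minimizer z \<in> ?K" by simp
    have "ereal (c - conjugate x + inner (x - z) (minimizer z))
        \<le> tilted g x (minimizer z) + ereal (inner (x - z) (minimizer z))"
      using add_right_mono[OF gap[OF \<open>minimizer z \<in> ?K\<close>], of "ereal (inner (x - z) (minimizer z))"]
      by simp
    also have "\<dots> = tilted g z (minimizer z)" by (rule tilted_shift[symmetric])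
    also have "\<dots> \<le> tilted g z (minimizer x)" by (rule minimizer_le)
    also have "\<dots> = ereal (- conjugate x + inner (x - z) (minimizer x))"
      by (simp add: tilted_shift[of g z _ x] tilted_minimizer)
    finally have "c \<le> inner (x - z) (minimizer x) - inner (x - z) (minimizer z)" by simp
    also have "\<dots> = inner (x - z) (minimizer x - minimizer z)" by (simp add: inner_diff_right)
    also have "\<dots> \<le> dist z x * norm (minimizer x - minimizer z)"
      using norm_cauchy_schwarz by (simp add: dist_norm norm_minus_commute)
    also have "\<dots> \<le> dist z x * ?L"
      using \<open>norm (minimizer z) < R\<close> norm_triangle_ineq4[of "minimizer x" "minimizer z"]
      by (intro mult_left_mono) auto
    also have "\<dots> < d * ?L" using that \<open>0 < ?L\<close> by simp
    finally show False using \<open>d * ?L \<le> c\<close> by simp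
  qed
  moreover have "0 < d" using \<open>0 < c\<close> \<open>0 < ?L\<close> by (simp add: d_def)
  ultimately show "\<exists>d>0. \<forall>z. dist z x < d \<longrightarrow> dist (minimizer z) (minimizer x) < e" by blast
qed

lemma conjugate_has_derivative: "(conjugate has_derivative inner (minimizer x)) (at x)"
  by (rule has_derivative_if_continuous_subgradient[OF conjugate_subgradient continuous_minimizer])

lemma approximate_by_minimizers:
  assumes M: "\<And>x. inner x z - conjugate x \<le> M" and "0 < t"
  obtains w where "g w \<le> ereal M" and "(dist w z)\<^sup>2 \<le> 2 * t * (conjugate 0 + M)"
proof -
  define \<psi> where "\<psi> x = conjugate x - inner x z + t / 2 * inner x x" for x
  have "continuous_on UNIV conjugate"
    using conjugate_has_derivative has_derivative_continuous continuous_at_imp_continuous_on by blast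
  then have "continuous_on UNIV \<psi>" unfolding \<psi>_def by (intro continuous_intros)
  moreover have growth: "t / 2 * (norm x)\<^sup>2 - M \<le> \<psi> x" for x
    using M[of x] by (simp add: \<psi>_def power2_norm_eq_inner)
  ultimately obtain x0 where min: "\<And>x. \<psi> x0 \<le> \<psi> x"
    using continuous_quadratic_growth_attains_min half_gt_zero[OF \<open>0 < t\<close>] by metis
  have "(\<psi> has_derivative (\<lambda>h. inner (minimizer x0) h - inner h z + t / 2 * (inner x0 h + inner h x0))) (at x0)"
    unfolding \<psi>_def
    by (intro has_derivative_diff has_derivative_add conjugate_has_derivative has_derivative_mult_right
        has_derivative_inner_left has_derivative_inner has_derivative_ident)
  \<comment> \<open>Fermat's rule at \<open>x0\<close>: the gradient \<open>minimizer x0\<close> of the conjugate equals \<open>z - t x0\<close>.\<close>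
  then have "(\<lambda>h. inner (minimizer x0) h - inner h z + t / 2 * (inner x0 h + inner h x0)) = (\<lambda>h. 0)"
    using differential_zero_maxmin[OF UNIV_I open_UNIV] min by blast
  moreover have "inner (minimizer x0 - z + t *\<^sub>R x0) h
      = inner (minimizer x0) h - inner h z + t / 2 * (inner x0 h + inner h x0)" for h
    by (simp add: inner_commute[of h] algebra_simps)
  ultimately have "inner (minimizer x0 - z + t *\<^sub>R x0) (minimizer x0 - z + t *\<^sub>R x0) = 0"
    by metis
  then have "minimizer x0 - z + t *\<^sub>R x0 = 0" by simp
  then have w: "minimizer x0 = z - t *\<^sub>R x0" by (simp add: algebra_simps eq_diff_eq)
  show ?thesis
  proof
    have "inner x0 (minimizer x0) = inner x0 z - t * (norm x0)\<^sup>2"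
      by (simp add: w inner_diff_right power2_norm_eq_inner)
    then have "g (minimizer x0) = ereal (inner x0 z - conjugate x0 - t * (norm x0)\<^sup>2)"
      by (simp add: g_minimizer)
    moreover have "0 \<le> t * (norm x0)\<^sup>2" using \<open>0 < t\<close> by simp
    ultimately show "g (minimizer x0) \<le> ereal M"
      using M[of x0] by simp
    have "t / 2 * (norm x0)\<^sup>2 - M \<le> conjugate 0"
      using growth[of x0] min[of 0] by (simp add: \<psi>_def)
    then have "t * (t * (norm x0)\<^sup>2) \<le> t * (2 * (conjugate 0 + M))"
      using \<open>0 < t\<close> by (intro mult_left_mono) auto
    then show "(dist (minimizer x0) z)\<^sup>2 \<le> 2 * t * (conjugate 0 + M)"
      using \<open>0 < t\<close> by (simp add: w dist_norm power_mult_distrib power2_eq_square algebra_simps)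
  qed
qed

lemma le_biconjugate:
  assumes "\<And>x. inner x z - conjugate x \<le> M"
  shows "g z \<le> ereal M"
proof -
  have "closed {w. g w \<le> ereal M}"
    using open_superlevel[of M] by (simp add: closed_def Compl_eq not_le)
  moreover have "\<exists>w\<in>{w. g w \<le> ereal M}. dist w z < e" if "0 < e" for e
  proof -
    define C where "C = \<bar>conjugate 0 + M\<bar> + 1"
    define t where "t = e\<^sup>2 / (2 * C)"
    have "0 < C" by (simp add: C_def add_nonneg_pos)
    with \<open>0 < e\<close> have "0 < t" by (simp add: t_def)
    then obtain w where "g w \<le> ereal M" and w: "(dist w z)\<^sup>2 \<le> 2 * t * (conjugate 0 + M)"
      using approximate_by_minimizers[OF assms] by metis
    have "2 * t * (conjugate 0 + M) < 2 * t * C" using \<open>0 < t\<close> by (simp add: C_def)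
    also have "\<dots> = e\<^sup>2" using \<open>0 < C\<close> by (simp add: t_def)
    finally have "(dist w z)\<^sup>2 < e\<^sup>2" using w by linarith
    then have "dist w z < e" using \<open>0 < e\<close> by (simp add: power_less_imp_less_base)
    with \<open>g w \<le> ereal M\<close> show ?thesis by blast
  qed
  ultimately show ?thesis using closed_approachable by blast
qed

lemma convex_efun_g: "convex_efun g"
  unfolding convex_efun_def
proof (intro allI impI)
  fix a b :: 'a and s :: real assume s: "0 < s \<and> s < 1"
  show "g (s *\<^sub>R a + (1 - s) *\<^sub>R b) \<le> ereal s * g a + ereal (1 - s) * g b"
  proof (cases "g a = \<infinity> \<or> g b = \<infinity>")
    case True
    then have infty: "ereal s * g a + ereal (1 - s) * g b = \<infinity>"
      using s not_MInf[of a] not_MInf[of b] by auto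
    show ?thesis unfolding infty by simp
  next
    case False
    then obtain A B where AB: "g a = ereal A" "g b = ereal B"
      using not_MInf[of a] not_MInf[of b] by (cases "g a"; cases "g b") auto
    have "g (s *\<^sub>R a + (1 - s) *\<^sub>R b) \<le> ereal (s * A + (1 - s) * B)"
    proof (rule le_biconjugate)
      fix x
      have "s * (inner x a - conjugate x) \<le> s * A" "(1 - s) * (inner x b - conjugate x) \<le> (1 - s) * B"
        using fenchel_young[OF AB(1), of x] fenchel_young[OF AB(2), of x] s
        by (auto intro: mult_left_mono)
      moreover have "inner x (s *\<^sub>R a + (1 - s) *\<^sub>R b) - conjugate x
          = s * (inner x a - conjugate x) + (1 - s) * (inner x b - conjugate x)"
        by (simp add: algebra_simps)
      ultimately show "inner x (s *\<^sub>R a + (1 - s) *\<^sub>R b) - conjugate x \<le> s * A + (1 - s) * B"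
        by linarith
    qed
    then show ?thesis using AB by simp
  qed
qed

lemma eq_minimizer_if_fenchel_young_eq:
  assumes "g y = ereal r" and "inner x y - r = conjugate x"
  shows "y = minimizer x"
proof -
  have "tilted g x y = tilted g x (minimizer x)"
    using assms by (simp add: tilted_def g_minimizer)
  then have "y \<in> tilted_argmin g x"
    using minimizer_le unfolding tilted_argmin_def by simp
  then show ?thesis by (simp add: tilted_argmin_eq)
qed

lemma ess_strictly_convex_efun_g: "ess_strictly_convex g"
  unfolding ess_strictly_convex_def
proof (intro conjI proper convex_efun_g allI impI)
  fix C assume C: "convex C \<and> C \<subseteq> {x. subdiff g x \<noteq> {}}"
  show "strictly_convex_on_efun C g"
    unfolding strictly_convex_on_efun_def
  proof (intro ballI allI impI)
    fix a b :: 'a and s :: real assume "a \<in> C" "b \<in> C" and s: "a \<noteq> b \<and> 0 < s \<and> s < 1"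
    define z where "z = s *\<^sub>R a + (1 - s) *\<^sub>R b"
    have "z \<in> C" using C \<open>a \<in> C\<close> \<open>b \<in> C\<close> s unfolding z_def by (simp add: convexD)
    then obtain v where "z \<in> tilted_argmin g v"
      using C subdiff_iff_tilted_argmin[OF proper] by blast
    then have z: "z = minimizer v" by (simp add: tilted_argmin_eq)
    have "subdiff g a \<noteq> {}" "subdiff g b \<noteq> {}" using C \<open>a \<in> C\<close> \<open>b \<in> C\<close> by auto
    then have "\<bar>g a\<bar> \<noteq> \<infinity>" "\<bar>g b\<bar> \<noteq> \<infinity>" unfolding subdiff_def by auto
    then obtain A B where A: "g a = ereal A" and B: "g b = ereal B" by auto
    show "g z < ereal s * g a + ereal (1 - s) * g b"
    proof (rule ccontr)
      assume "\<not> ?thesis"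
      then have ge: "s * A + (1 - s) * B \<le> inner v z - conjugate v"
        using A B g_minimizer[of v] z by simp
      define \<alpha> where "\<alpha> = conjugate v - (inner v a - A)"
      define \<beta> where "\<beta> = conjugate v - (inner v b - B)"
      have "0 \<le> \<alpha>" "0 \<le> \<beta>"
        using fenchel_young[OF A] fenchel_young[OF B] by (simp_all add: \<alpha>_def \<beta>_def)
      moreover have "s * \<alpha> + (1 - s) * \<beta> = conjugate v - inner v z + (s * A + (1 - s) * B)"
        unfolding \<alpha>_def \<beta>_def z_def by (simp add: algebra_simps)
      ultimately have "s * \<alpha> = 0" "(1 - s) * \<beta> = 0"
        using ge s mult_nonneg_nonneg[of s \<alpha>] mult_nonneg_nonneg[of "1 - s" \<beta>] by linarith+
      then have "a = minimizer v" "b = minimizer v"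
        using s A B by (auto simp: \<alpha>_def \<beta>_def intro: eq_minimizer_if_fenchel_young_eq)
      with s show False by simp
    qed
  qed
qed

lemma tilted_linear_growth:
  assumes "0 < t"
  shows "\<exists>d>0. \<forall>y. t \<le> norm (y - minimizer x) \<longrightarrow>
    ereal (norm (y - minimizer x) * d - conjugate x) \<le> tilted g x y"
proof -
  let ?u = "minimizer x"
  have "compact (sphere ?u t)" "?u \<notin> sphere ?u t" using \<open>0 < t\<close> by auto
  then obtain c where "0 < c" and gap: "\<And>w. w \<in> sphere ?u t \<Longrightarrow> ereal (c - conjugate x) \<le> tilted g x w"
    using tilted_gap_on_compact by blast
  have "ereal (norm (y - ?u) * (c / t) - conjugate x) \<le> tilted g x y" if "t \<le> norm (y - ?u)" for y
  proof (cases "g y")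
    case (real Y)
    define r where "r = norm (y - ?u)"
    define s where "s = t / r"
    have "t \<le> r" using that unfolding r_def .
    with \<open>0 < t\<close> have "0 < r" "0 < s" "s \<le> 1" by (simp_all add: s_def)
    define w where "w = s *\<^sub>R y + (1 - s) *\<^sub>R ?u"
    have "w - ?u = s *\<^sub>R (y - ?u)" by (simp add: w_def algebra_simps)
    then have "w \<in> sphere ?u t" using \<open>0 < s\<close> \<open>0 < r\<close> \<open>0 < t\<close>
      by (simp add: dist_norm norm_minus_commute r_def[symmetric] s_def)
    then have "ereal (c - conjugate x) \<le> tilted g x w" by (rule gap)
    also have "\<dots> \<le> ereal (s * (Y - inner x y) + (1 - s) * (- conjugate x))"
    proof (cases "s = 1")
      case True
      then show ?thesis using real by (simp add: w_def tilted_def)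
    next
      case False
      then have "g w \<le> ereal s * g y + ereal (1 - s) * g ?u"
        using convex_efun_g \<open>0 < s\<close> \<open>s \<le> 1\<close> unfolding convex_efun_def w_def by simp
      then have "g w \<le> ereal (s * Y + (1 - s) * (inner x ?u - conjugate x))"
        using real g_minimizer by simp
      moreover have "inner x w = s * inner x y + (1 - s) * inner x ?u"
        by (simp add: w_def inner_add_right)
      ultimately show ?thesis
        using not_MInf[of w] by (cases "g w") (auto simp: tilted_def algebra_simps)
    qed
    finally have "c \<le> s * (Y - inner x y + conjugate x)" by (simp add: algebra_simps)
    then have "r * (c / t) \<le> Y - inner x y + conjugate x"
      using \<open>0 < r\<close> \<open>0 < t\<close> by (simp add: s_def field_simps)
    then show ?thesis using real by (simp add: r_def tilted_def)
  qed (use not_MInf in \<open>auto simp: tilted_def\<close>)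
  with \<open>0 < c\<close> \<open>0 < t\<close> show ?thesis by (intro exI[of _ "c / t"]) simp
qed

lemma ess_strongly_convex_at_minimizer: "ess_strongly_convex_at g (minimizer x) x"
proof -
  let ?u = "minimizer x"
  have "\<forall>t. \<exists>d. 0 < t \<longrightarrow> 0 < d \<and>
      (\<forall>y. t \<le> norm (y - ?u) \<longrightarrow> ereal (norm (y - ?u) * d - conjugate x) \<le> tilted g x y)"
    using tilted_linear_growth by blast
  from choice[OF this] obtain d where d_pos: "\<And>t. 0 < t \<Longrightarrow> 0 < d t" and growth: "\<And>t y. 0 < t \<Longrightarrow>
      t \<le> norm (y - ?u) \<Longrightarrow> ereal (norm (y - ?u) * d t - conjugate x) \<le> tilted g x y"
    by blast
  \<comment> \<open>Beyond radius \<open>t\<close> the tilt grows with slope \<open>d t\<close>; the modulus is the upper envelope of these hinges.\<close>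
  define psi where "psi r = (SUP t\<in>{0<..}. ereal (max 0 ((r - t) * d t)))" for r
  have "g ?u + ereal (inner (y - ?u) x) + psi (norm (y - ?u)) \<le> g y" for y
  proof (cases "g y")
    case (real Y)
    let ?gap = "Y - inner x y + conjugate x"
    have "psi (norm (y - ?u)) \<le> ereal ?gap"
      unfolding psi_def
    proof (rule SUP_least)
      fix t :: real assume "t \<in> {0<..}"
      have "(norm (y - ?u) - t) * d t \<le> ?gap"
      proof (cases "t \<le> norm (y - ?u)")
        case True
        have "(norm (y - ?u) - t) * d t \<le> norm (y - ?u) * d t"
          using d_pos[of t] \<open>t \<in> {0<..}\<close> by (simp add: mult_right_mono)
        also have "\<dots> \<le> ?gap" using growth[OF _ True] real \<open>t \<in> {0<..}\<close> by (simp add: tilted_def)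
        finally show ?thesis .
      next
        case False
        then have "(norm (y - ?u) - t) * d t \<le> 0"
          using d_pos[of t] \<open>t \<in> {0<..}\<close> by (simp add: mult_nonpos_nonneg)
        then show ?thesis using fenchel_young[OF real, of x] by simp
      qed
      then show "ereal (max 0 ((norm (y - ?u) - t) * d t)) \<le> ereal ?gap"
        using fenchel_young[OF real, of x] by simp
    qed
    then have "ereal (inner x ?u - conjugate x + inner (y - ?u) x) + psi (norm (y - ?u))
        \<le> ereal (inner x ?u - conjugate x + inner (y - ?u) x) + ereal ?gap"
      by (rule add_left_mono)
    also have "\<dots> = g y" using real by (simp add: inner_commute inner_diff_left inner_diff_right)
    finally show ?thesis by (simp add: g_minimizer)
  qed (use not_MInf in auto)
  moreover have "psi \<in> Gamma0" unfolding psi_def by (rule hinge_SUP_in_Gamma0[OF d_pos])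
  ultimately show ?thesis unfolding ess_strongly_convex_at_def by (auto simp: g_minimizer)
qed

end

section \<open>The proximal mapping\<close>

context coercive_lsc_fun
begin

lemma unique_tilted_argminI: "(\<forall>x. \<exists>u. tilted_argmin g x = {u}) \<Longrightarrow> unique_tilted_argmin g"
  by (simp add: unique_tilted_argmin_def unique_tilted_argmin_axioms_def coercive_lsc_fun_axioms)

lemma unique_tilted_argmin_iff_ess_strongly_convex_at:
  "(\<forall>x. \<exists>u. tilted_argmin g x = {u}) \<longleftrightarrow> (\<forall>x. \<exists>u\<in>tilted_argmin g x. ess_strongly_convex_at g u x)"
proof
  assume "\<forall>x. \<exists>u. tilted_argmin g x = {u}"
  then interpret unique_tilted_argmin g by (rule unique_tilted_argminI)
  show "\<forall>x. \<exists>u\<in>tilted_argmin g x. ess_strongly_convex_at g u x"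
    using ess_strongly_convex_at_minimizer by (simp add: tilted_argmin_eq)
next
  assume "\<forall>x. \<exists>u\<in>tilted_argmin g x. ess_strongly_convex_at g u x"
  then show "\<forall>x. \<exists>u. tilted_argmin g x = {u}"
    using tilted_argmin_eq_singleton_if_ess_strongly_convex_at by blast
qed

lemma unique_tilted_argmin_iff_ess_strictly_convex:
  "(\<forall>x. \<exists>u. tilted_argmin g x = {u}) \<longleftrightarrow> ess_strictly_convex g"
proof
  assume "\<forall>x. \<exists>u. tilted_argmin g x = {u}"
  then interpret unique_tilted_argmin g by (rule unique_tilted_argminI)
  show "ess_strictly_convex g" by (rule ess_strictly_convex_efun_g)
next
  assume strict: "ess_strictly_convex g"
  show "\<forall>x. \<exists>u. tilted_argmin g x = {u}"
  proof
    fix x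
    obtain u where "u \<in> tilted_argmin g x" using tilted_argmin_nonempty by blast
    then show "\<exists>u. tilted_argmin g x = {u}"
      using tilted_argmin_subsingleton_if_ess_strictly_convex[OF strict] by blast
  qed
qed

lemma fconj_has_derivative_if_unique_tilted_argmin:
  assumes "\<forall>x. \<exists>u. tilted_argmin g x = {u}"
  shows "\<bar>fconj g x\<bar> \<noteq> \<infinity> \<and>
    ((\<lambda>y. real_of_ereal (fconj g y)) has_derivative inner (THE u. u \<in> tilted_argmin g x)) (at x)"
proof -
  interpret unique_tilted_argmin g using assms by (rule unique_tilted_argminI)
  show ?thesis
    using conjugate_has_derivative[of x] by (simp add: fconj_eq_conjugate minimizer_def)
qed

end

lemma prox_eq_tilted_argmin:
  fixes f :: "'a::real_inner \<Rightarrow> ereal"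
  assumes not_MInf: "\<And>y. f y \<noteq> -\<infinity>" and "0 < lam"
  shows "prox lam f x = tilted_argmin (\<lambda>y. ereal lam * f y + ereal (jfun y)) x"
proof -
  let ?g = "\<lambda>y. ereal lam * f y + ereal (jfun y)"
  have scaled: "ereal lam * (f y + ereal ((norm (y - x))\<^sup>2 / (2 * lam))) = tilted ?g x y + ereal (jfun x)"
    for y
  proof (cases "f y")
    case (real r)
    have "lam * (r + (norm (y - x))\<^sup>2 / (2 * lam)) = lam * r + jfun y - inner x y + jfun x"
      using \<open>0 < lam\<close>
      by (simp add: jfun_def power2_norm_eq_inner inner_diff_left inner_diff_right inner_commute
          field_simps)
    then show ?thesis using real by (simp add: tilted_def)
  qed (use \<open>0 < lam\<close> not_MInf in \<open>auto simp: tilted_def\<close>)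
  have "u \<in> prox lam f x \<longleftrightarrow> (\<forall>y. tilted ?g x u + ereal (jfun x) \<le> tilted ?g x y + ereal (jfun x))" for u
    unfolding prox_def scaled[symmetric] using \<open>0 < lam\<close> by (simp add: ereal_mult_le_mult_iff)
  then show ?thesis unfolding tilted_argmin_def by (simp add: ereal_add_le_add_iff2 set_eq_iff)
qed

lemma sq_minus_shifted_sq_lower_bound:
  fixes \<rho> n a :: real
  assumes "0 < \<rho>" and "\<rho> < 1"
  shows "(1 - \<rho>) / 4 * n\<^sup>2 - ((\<rho> * a)\<^sup>2 / (1 - \<rho>) + \<rho> * a\<^sup>2 / 2) \<le> n\<^sup>2 / 2 - \<rho> * (n + a)\<^sup>2 / 2"
proof -
  have "n\<^sup>2 / 2 - \<rho> * (n + a)\<^sup>2 / 2 - ((1 - \<rho>) / 4 * n\<^sup>2 - ((\<rho> * a)\<^sup>2 / (1 - \<rho>) + \<rho> * a\<^sup>2 / 2))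
      = ((1 - \<rho>) * n - 2 * \<rho> * a)\<^sup>2 / (4 * (1 - \<rho>))"
    using \<open>\<rho> < 1\<close> by (simp add: field_simps power2_eq_square)
  also have "\<dots> \<ge> 0" using \<open>\<rho> < 1\<close> by simp
  finally show ?thesis by simp
qed

lemma prox_regularization_quadratic_minorant:
  fixes f :: "'a::real_normed_vector \<Rightarrow> ereal"
  assumes not_MInf: "\<And>y. f y \<noteq> -\<infinity>" and "0 < lam" and "ereal lam < prox_threshold f"
  shows "\<exists>\<epsilon>>0. \<exists>K. \<forall>y. ereal (\<epsilon> * (norm y)\<^sup>2 - K) \<le> ereal lam * f y + ereal (jfun y)"
proof -
  obtain lam' x0 where "0 < lam'" "-\<infinity> < moreau_env lam' f x0" "lam < lam'"
    using assms(3) unfolding prox_threshold_def less_Sup_iff by auto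
  then obtain c where "ereal c < moreau_env lam' f x0" using ereal_dense2 by blast
  then have lower: "ereal c \<le> f y + ereal ((norm (y - x0))\<^sup>2 / (2 * lam'))" for y
    unfolding moreau_env_def using INF_lower[of y UNIV] by (meson UNIV_I less_imp_le order_trans)
  define \<rho> where "\<rho> = lam / lam'"
  have "0 < \<rho>" "\<rho> < 1" using \<open>0 < lam\<close> \<open>lam < lam'\<close> by (simp_all add: \<rho>_def)
  define a where "a = norm x0"
  define \<epsilon> where "\<epsilon> = (1 - \<rho>) / 4"
  define K where "K = (\<rho> * a)\<^sup>2 / (1 - \<rho>) + \<rho> * a\<^sup>2 / 2 + \<bar>lam * c\<bar>"
  have "ereal (\<epsilon> * (norm y)\<^sup>2 - K) \<le> ereal lam * f y + ereal (jfun y)" for y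
  proof (cases "f y")
    case (real r)
    define n where "n = norm y"
    have "lam * c \<le> lam * (r + (norm (y - x0))\<^sup>2 / (2 * lam'))"
      using lower[of y] real \<open>0 < lam\<close> by simp
    also have "\<dots> = lam * r + \<rho> * (norm (y - x0))\<^sup>2 / 2"
      using \<open>0 < lam'\<close> by (simp add: \<rho>_def field_simps)
    finally have env_bound: "lam * c \<le> lam * r + \<rho> * (norm (y - x0))\<^sup>2 / 2" .
    have "norm (y - x0) \<le> n + a" unfolding n_def a_def by (rule norm_triangle_ineq4)
    then have shift_bound: "\<rho> * (norm (y - x0))\<^sup>2 \<le> \<rho> * (n + a)\<^sup>2"
      using \<open>0 < \<rho>\<close> by (intro mult_left_mono power_mono) auto
    have "\<epsilon> * n\<^sup>2 - K \<le> lam * c + n\<^sup>2 / 2 - \<rho> * (n + a)\<^sup>2 / 2"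
      using sq_minus_shifted_sq_lower_bound[OF \<open>0 < \<rho>\<close> \<open>\<rho> < 1\<close>, of n a]
        abs_ge_minus_self[of "lam * c"] unfolding \<epsilon>_def K_def by linarith
    with env_bound shift_bound have "\<epsilon> * n\<^sup>2 - K \<le> lam * r + n\<^sup>2 / 2" by linarith
    then show ?thesis using real by (simp add: jfun_def n_def)
  qed (use \<open>0 < lam\<close> not_MInf in auto)
  moreover have "0 < \<epsilon>" using \<open>\<rho> < 1\<close> by (simp add: \<epsilon>_def)
  ultimately show ?thesis by blast
qed

lemma coercive_lsc_fun_prox_regularization:
  fixes f :: "'a::euclidean_space \<Rightarrow> ereal"
  assumes "proper_fun f" and "lsc_fun f" and "0 < lam" and "ereal lam < prox_threshold f"
  shows "coercive_lsc_fun (\<lambda>y. ereal lam * f y + ereal (jfun y))"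
proof
  have not_MInf: "f y \<noteq> -\<infinity>" for y using assms(1) unfolding proper_fun_def by blast
  then have lam_f: "ereal lam * f y \<noteq> -\<infinity>" for y using \<open>0 < lam\<close> by (cases "f y") auto
  obtain y0 where "f y0 \<noteq> \<infinity>" using assms(1) unfolding proper_fun_def by blast
  then have "ereal lam * f y0 + ereal (jfun y0) \<noteq> \<infinity>" using not_MInf[of y0] by (cases "f y0") auto
  with lam_f show "proper_fun (\<lambda>y. ereal lam * f y + ereal (jfun y))"
    unfolding proper_fun_def by auto
  show "open {y. ereal t < ereal lam * f y + ereal (jfun y)}" for t
    using open_superlevel_mult[OF lsc_fun_imp_open_superlevel[OF assms(2)] \<open>0 < lam\<close>] _ lam_f
    by (rule open_superlevel_add_continuous) (simp add: jfun_def continuous_intros)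
  show "\<exists>\<epsilon>>0. \<exists>K. \<forall>y. ereal (\<epsilon> * (norm y)\<^sup>2 - K) \<le> ereal lam * f y + ereal (jfun y)"
    using not_MInf assms(3,4) by (rule prox_regularization_quadratic_minorant)
qed

theorem mainTheorem10:
  fixes f :: "'a::euclidean_space \<Rightarrow> ereal" and lam :: real
  assumes "proper_fun f" and "lsc_fun f" and "prox_bounded f"
    and "prox_threshold f > 0"
    and "0 < lam" and "ereal lam < prox_threshold f"
  defines "g \<equiv> (\<lambda>y. ereal lam * f y + ereal (jfun y))"
  shows "((\<forall>x. \<exists>u. prox lam f x = {u})
           \<longleftrightarrow> (\<forall>x. \<exists>u\<in>prox lam f x. ess_strongly_convex_at g u x))
       \<and> ((\<forall>x. \<exists>u. prox lam f x = {u}) \<longleftrightarrow> ess_strictly_convex g)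
       \<and> ((\<forall>x. \<exists>u. prox lam f x = {u}) \<longrightarrow>
            (\<forall>x. \<bar>fconj g x\<bar> \<noteq> \<infinity> \<and>
                 ((\<lambda>y. real_of_ereal (fconj g y)) has_derivative
                    (\<lambda>h. inner (THE u. u \<in> prox lam f x) h)) (at x)))"
proof -
  \<comment> \<open>\<open>prox_bounded f\<close> and \<open>0 < prox_threshold f\<close> are implied by \<open>0 < lam < prox_threshold f\<close>.\<close>
  interpret coercive_lsc_fun g
    unfolding g_def using assms(1,2,5,6) by (rule coercive_lsc_fun_prox_regularization)
  have "prox lam f = tilted_argmin g"
    using assms(1,5) unfolding g_def proper_fun_def by (intro ext prox_eq_tilted_argmin) auto
  then show ?thesis
    using unique_tilted_argmin_iff_ess_strongly_convex_at unique_tilted_argmin_iff_ess_strictly_convex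
      fconj_has_derivative_if_unique_tilted_argmin by simp
qed

end
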